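(* For every $n\geq1$, \[ \lvert eNNC_{2n}\rvert=\sum_{j=0}^{n}(-1)^j\binom{n}{j}\lvert NNC_{2n-j}\rvert. \]
   Context: For $m\geq0$, a non-exhaustive non-crossing partition of $[m]=\{1,\dots,m\}$ is a collection $\mathcal{P}$ of pairwise disjoint nonempty subsets (blocks) of $[m]$, not necessarily covering $[m]$ (the empty collection is allowed), such that whenever $1\leq i<k<j<l\leq m$ with $i,j$ in a block $B$ and $k,l$ in a block $B'$, then $B=B'$. $NNC_m$ denotes the set of these. $eNNC_{2n}\subseteq NNC_{2n}$ is the set of those partitions of $[2n]$ that contain no block of the form $\{i\}$ with $i$ even. *)

theory Defs
  imports Main
begin

definition NNC :: "nat \<Rightarrow> nat set set set" where
  "NNC m = {P. (\<forall>B\<in>P. B \<noteq> {} \<and> B \<subseteq> {1..m})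
              \<and> (\<forall>B\<in>P. \<forall>B'\<in>P. B \<noteq> B' \<longrightarrow> B \<inter> B' = {})
              \<and> (\<forall>B\<in>P. \<forall>B'\<in>P. \<forall>i k j l. 1 \<le> i \<and> i < k \<and> k < j \<and> j < l \<and> l \<le> m
                    \<and> i \<in> B \<and> j \<in> B \<and> k \<in> B' \<and> l \<in> B' \<longrightarrow> B = B')}"

definition eNNC :: "nat \<Rightarrow> nat set set set" where
  "eNNC n = {P \<in> NNC (2 * n). \<forall>i. even i \<longrightarrow> {i} \<notin> P}"

end

theory Submission
  imports Defs "HOL-Library.Infinite_Set"
begin

text \<open>Inclusion-exclusion over the set \<open>E\<close> of the \<open>n\<close> even points of \<open>{1..2n}\<close>: for
\<open>S \<subseteq> E\<close>, the partitions containing every singleton \<open>{i}\<close>, \<open>i \<in> S\<close>, are exactly the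
non-crossing partitions of \<open>{1..2n} - S\<close> with those singletons added, since a singleton can
never take part in a crossing. Non-crossingness only depends on the relative order of the
points, so these are counted by \<open>|NNC_{2n-|S|}|\<close>, and grouping the subsets \<open>S\<close> by size
gives the binomial coefficients.\<close>

definition crosses :: "'a::linorder set \<Rightarrow> 'a set \<Rightarrow> bool" where
  "crosses B B' \<longleftrightarrow> (\<exists>i k j l. i < k \<and> k < j \<and> j < l \<and> i \<in> B \<and> j \<in> B \<and> k \<in> B' \<and> l \<in> B')"

definition NNC_on :: "'a::linorder set \<Rightarrow> 'a set set set" where
  "NNC_on X = {P. (\<forall>B\<in>P. B \<noteq> {} \<and> B \<subseteq> X)
                \<and> (\<forall>B\<in>P. \<forall>B'\<in>P. B \<noteq> B' \<longrightarrow> B \<inter> B' = {})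
                \<and> (\<forall>B\<in>P. \<forall>B'\<in>P. crosses B B' \<longrightarrow> B = B')}"

lemma NNC_onI:
  assumes "\<And>B. B \<in> P \<Longrightarrow> B \<noteq> {}" and "\<And>B. B \<in> P \<Longrightarrow> B \<subseteq> X"
    and "\<And>B B'. B \<in> P \<Longrightarrow> B' \<in> P \<Longrightarrow> B \<noteq> B' \<Longrightarrow> B \<inter> B' = {}"
    and "\<And>B B'. B \<in> P \<Longrightarrow> B' \<in> P \<Longrightarrow> crosses B B' \<Longrightarrow> B = B'"
  shows "P \<in> NNC_on X"
  unfolding NNC_on_def mem_Collect_eq
  by (intro conjI ballI impI; rule assms; assumption)

lemma
  assumes "P \<in> NNC_on X" and "B \<in> P"
  shows NNC_on_nonempty: "B \<noteq> {}"
    and NNC_on_subset: "B \<subseteq> X"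
  using assms by (simp_all add: NNC_on_def)

lemma NNC_on_disjoint: "P \<in> NNC_on X \<Longrightarrow> B \<in> P \<Longrightarrow> B' \<in> P \<Longrightarrow> B \<noteq> B' \<Longrightarrow> B \<inter> B' = {}"
  by (simp add: NNC_on_def)

lemma NNC_on_noncrossing:
  assumes "P \<in> NNC_on X" and "B \<in> P" "B' \<in> P" "crosses B B'"
  shows "B = B'"
proof -
  have "\<forall>B\<in>P. \<forall>B'\<in>P. crosses B B' \<longrightarrow> B = B'" using assms(1) by (simp add: NNC_on_def)
  then show ?thesis using assms(2-) by blast
qed

lemma crosses_atLeastAtMost_iff:
  assumes "B \<subseteq> {1..m}" and "B' \<subseteq> {1..m}"
  shows "crosses B B' \<longleftrightarrow> (\<exists>i k j l. 1 \<le> i \<and> i < k \<and> k < j \<and> j < l \<and> l \<le> m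
           \<and> i \<in> B \<and> j \<in> B \<and> k \<in> B' \<and> l \<in> B')"
proof
  assume "crosses B B'"
  then obtain i k j l where "i < k" "k < j" "j < l" "i \<in> B" "j \<in> B" "k \<in> B'" "l \<in> B'"
    unfolding crosses_def by blast
  moreover from calculation have "1 \<le> i" "l \<le> m" using assms by auto
  ultimately show "\<exists>i k j l. 1 \<le> i \<and> i < k \<and> k < j \<and> j < l \<and> l \<le> m
         \<and> i \<in> B \<and> j \<in> B \<and> k \<in> B' \<and> l \<in> B'" by blast
qed (unfold crosses_def, blast)

lemma NNC_eq_NNC_on: "NNC m = NNC_on {1..m}"
  unfolding NNC_def NNC_on_def
proof (intro Collect_cong conj_cong refl ball_cong)
  fix P B B' assume "\<forall>B\<in>P. B \<noteq> {} \<and> B \<subseteq> {1..m}" "B \<in> P" "B' \<in> P"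
  then have "crosses B B' \<longleftrightarrow> (\<exists>i k j l. 1 \<le> i \<and> i < k \<and> k < j \<and> j < l \<and> l \<le> m
           \<and> i \<in> B \<and> j \<in> B \<and> k \<in> B' \<and> l \<in> B')"
    by (intro crosses_atLeastAtMost_iff) auto
  then show "(\<forall>i k j l. 1 \<le> i \<and> i < k \<and> k < j \<and> j < l \<and> l \<le> m
                    \<and> i \<in> B \<and> j \<in> B \<and> k \<in> B' \<and> l \<in> B' \<longrightarrow> B = B')
      \<longleftrightarrow> (crosses B B' \<longrightarrow> B = B')"
    by blast
qed

lemma finite_NNC_on: "finite X \<Longrightarrow> finite (NNC_on X)"
  by (rule finite_subset[of _ "Pow (Pow X)"]) (auto simp: NNC_on_def)

lemma crosses_singleton [simp]: "\<not> crosses {x} B" "\<not> crosses B {x}"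
  unfolding crosses_def by auto

lemma crosses_imageD:
  assumes mono: "strict_mono_on X f" and "B \<subseteq> X" "B' \<subseteq> X"
    and "crosses (f ` B) (f ` B')"
  shows "crosses B B'"
proof -
  obtain a b c d where "a \<in> B" "b \<in> B" "c \<in> B'" "d \<in> B'" "f a < f c" "f c < f b" "f b < f d"
    using \<open>crosses (f ` B) (f ` B')\<close> unfolding crosses_def by blast
  moreover from calculation have "a < c" "c < b" "b < d"
    using strict_mono_on_less[OF mono] \<open>B \<subseteq> X\<close> \<open>B' \<subseteq> X\<close> by (meson subsetD)+
  ultimately show ?thesis unfolding crosses_def by blast
qed

lemma strict_mono_on_the_inv_into:
  fixes f :: "'a::linorder \<Rightarrow> 'b::linorder"
  assumes "strict_mono_on X f"
  shows "strict_mono_on (f ` X) (the_inv_into X f)"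
proof (rule strict_mono_onI, elim imageE)
  fix u v a b assume "u < v" "a \<in> X" "b \<in> X" "u = f a" "v = f b"
  with assms show "the_inv_into X f u < the_inv_into X f v"
    by (simp add: strict_mono_on_less strict_mono_on_imp_inj_on the_inv_into_f_f)
qed

lemma image_image_in_NNC_on:
  fixes f :: "'a::linorder \<Rightarrow> 'b::linorder"
  assumes mono: "strict_mono_on X f" and P: "P \<in> NNC_on X"
  shows "image (image f) P \<in> NNC_on (f ` X)"
proof (rule NNC_onI; elim imageE)
  have inj: "inj_on f X" using mono by (rule strict_mono_on_imp_inj_on)
  fix C C' B B' assume B: "B \<in> P" "C = f ` B" and B': "B' \<in> P" "C' = f ` B'"
  then show "C \<noteq> {}" and "C \<subseteq> f ` X"
    using NNC_on_nonempty[OF P] NNC_on_subset[OF P] by auto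
  show "C \<inter> C' = {}" if "C \<noteq> C'"
  proof -
    have "B \<inter> B' = {}" using that B B' NNC_on_disjoint[OF P B(1) B'(1)] by blast
    then show ?thesis
      using B B' inj_on_image_Int[OF inj NNC_on_subset[OF P B(1)] NNC_on_subset[OF P B'(1)]] by simp
  qed
  show "C = C'" if "crosses C C'"
    using that B B' NNC_on_noncrossing[OF P B(1) B'(1)]
      crosses_imageD[OF mono NNC_on_subset[OF P B(1)] NNC_on_subset[OF P B'(1)]] by simp
qed

lemma card_NNC_on_le_image:
  fixes f :: "'a::linorder \<Rightarrow> 'b::linorder"
  assumes "finite X" and mono: "strict_mono_on X f"
  shows "card (NNC_on X) \<le> card (NNC_on (f ` X))"
proof (rule card_inj_on_le)
  have "inj_on (image (image f)) (Pow (Pow X))"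
    using mono by (intro inj_on_image_Pow strict_mono_on_imp_inj_on)
  moreover have "NNC_on X \<subseteq> Pow (Pow X)"
    using NNC_on_subset by blast
  ultimately show "inj_on (image (image f)) (NNC_on X)"
    by (rule inj_on_subset)
  show "image (image f) ` NNC_on X \<subseteq> NNC_on (f ` X)"
    using image_image_in_NNC_on[OF mono] by blast
  show "finite (NNC_on (f ` X))"
    using \<open>finite X\<close> by (simp add: finite_NNC_on)
qed

lemma card_NNC_on_image:
  fixes f :: "'a::linorder \<Rightarrow> 'b::linorder"
  assumes "finite X" and mono: "strict_mono_on X f"
  shows "card (NNC_on (f ` X)) = card (NNC_on X)"
proof (rule antisym)
  have "card (NNC_on (f ` X)) \<le> card (NNC_on (the_inv_into X f ` f ` X))"
    using assms by (intro card_NNC_on_le_image strict_mono_on_the_inv_into) simp_all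
  then show "card (NNC_on (f ` X)) \<le> card (NNC_on X)"
    using mono by (simp add: strict_mono_on_imp_inj_on)
qed (rule card_NNC_on_le_image[OF assms])

lemma card_NNC_on:
  fixes X :: "'a::wellorder set"
  assumes "finite X"
  shows "card (NNC_on X) = card (NNC (card X))"
proof -
  obtain h where h: "bij_betw h {..<card X} X" "strict_mono_on {..<card X} h"
    using ex_bij_betw_strict_mono_card[OF assms] .
  have "card (NNC_on X) = card (NNC_on {..<card X})"
    using card_NNC_on_image[OF _ h(2)] h(1) by (simp add: bij_betw_def)
  also have "\<dots> = card (NNC_on (Suc ` {..<card X}))"
    by (rule card_NNC_on_image[symmetric]) (simp_all add: strict_mono_onI)
  finally show ?thesis by (simp add: NNC_eq_NNC_on image_Suc_lessThan)
qed

lemma NNC_on_Diff_blocks: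
  assumes P: "P \<in> NNC_on X" and "Q \<subseteq> P"
  shows "P - Q \<in> NNC_on (X - \<Union>Q)"
proof (rule NNC_onI)
  fix B assume B: "B \<in> P - Q"
  then show "B \<noteq> {}" using NNC_on_nonempty[OF P] by blast
  have "B \<inter> C = {}" if "C \<in> Q" for C
    using B that \<open>Q \<subseteq> P\<close> NNC_on_disjoint[OF P, of B C] by blast
  then show "B \<subseteq> X - \<Union>Q" using B NNC_on_subset[OF P] by blast
next
  fix B B' assume "B \<in> P - Q" "B' \<in> P - Q"
  then show "B \<noteq> B' \<Longrightarrow> B \<inter> B' = {}" and "crosses B B' \<Longrightarrow> B = B'"
    using NNC_on_disjoint[OF P] NNC_on_noncrossing[OF P] by simp_all
qed

lemma NNC_on_Un_singletons:
  assumes P: "P \<in> NNC_on X" and "S \<inter> X = {}"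
  shows "P \<union> (\<lambda>i. {i}) ` S \<in> NNC_on (X \<union> S)"
proof (rule NNC_onI)
  fix B B' assume B: "B \<in> P \<union> (\<lambda>i. {i}) ` S" and B': "B' \<in> P \<union> (\<lambda>i. {i}) ` S"
  show "B \<inter> B' = {}" if "B \<noteq> B'"
    using B B' that NNC_on_disjoint[OF P] NNC_on_subset[OF P] \<open>S \<inter> X = {}\<close> by blast
  show "B = B'" if "crosses B B'"
    using B B' that NNC_on_noncrossing[OF P] by auto
qed (use NNC_on_nonempty[OF P] NNC_on_subset[OF P] in auto)

lemma card_NNC_on_containing_singletons:
  fixes X :: "'a::wellorder set"
  assumes "finite X" and "S \<subseteq> X"
  shows "card {P \<in> NNC_on X. (\<lambda>i. {i}) ` S \<subseteq> P} = card (NNC (card X - card S))"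
proof -
  let ?S = "(\<lambda>i. {i}) ` S"
  have "bij_betw (\<lambda>P. P \<union> ?S) (NNC_on (X - S)) {P \<in> NNC_on X. ?S \<subseteq> P}"
  proof (rule bij_betw_byWitness[where f' = "\<lambda>P. P - ?S"])
    show "\<forall>P\<in>NNC_on (X - S). P \<union> ?S - ?S = P"
      using NNC_on_subset by fastforce
    show "(\<lambda>P. P \<union> ?S) ` NNC_on (X - S) \<subseteq> {P \<in> NNC_on X. ?S \<subseteq> P}"
      using NNC_on_Un_singletons[of _ "X - S" S] \<open>S \<subseteq> X\<close> by (auto simp: Un_absorb2)
    show "(\<lambda>P. P - ?S) ` {P \<in> NNC_on X. ?S \<subseteq> P} \<subseteq> NNC_on (X - S)"
      using NNC_on_Diff_blocks[of _ X ?S] by auto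
  qed auto
  then have "card {P \<in> NNC_on X. ?S \<subseteq> P} = card (NNC_on (X - S))"
    by (simp add: bij_betw_same_card)
  also have "\<dots> = card (NNC (card X - card S))"
    using assms by (simp add: card_NNC_on card_Diff_subset finite_subset)
  finally show ?thesis .
qed

lemma card_NNC_with_singletons:
  assumes "S \<subseteq> {1..m}"
  shows "card {P \<in> NNC m. S \<subseteq> {i. {i} \<in> P}} = card (NNC (m - card S))"
proof -
  have "{P \<in> NNC m. S \<subseteq> {i. {i} \<in> P}} = {P \<in> NNC_on {1..m}. (\<lambda>i. {i}) ` S \<subseteq> P}"
    by (auto simp: NNC_eq_NNC_on)
  then show ?thesis
    using card_NNC_on_containing_singletons[OF _ assms] by simp
qed

lemma sum_Pow_neg_one_power:
  assumes "finite A"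
  shows "(\<Sum>S\<in>Pow A. (-1::'a::ring_1) ^ card S) = (if A = {} then 1 else 0)"
proof (cases "A = {}")
  case False
  then have "card {S. S \<subseteq> A \<and> {} \<subseteq> S \<and> even (card S)} = card {S. S \<subseteq> A \<and> {} \<subseteq> S \<and> odd (card S)}"
    using card_subsupersets_even_odd[OF assms] by blast
  then show ?thesis
    using False assms by (simp add: sum_alternating_cancels Pow_def)
qed simp

lemma int_card_disjoint_sieve:
  fixes T :: "'a \<Rightarrow> 'b set"
  assumes "finite N" and "finite E"
  shows "int (card {x \<in> N. E \<inter> T x = {}})
    = (\<Sum>S\<in>Pow E. (-1) ^ card S * int (card {x \<in> N. S \<subseteq> T x}))"
proof -
  have inner: "(\<Sum>S\<in>Pow E. if S \<subseteq> T x then (-1) ^ card S else 0) = (if E \<inter> T x = {} then 1 else 0 :: int)"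
    for x
  proof -
    have "(\<Sum>S\<in>Pow E. if S \<subseteq> T x then (-1) ^ card S else 0)
        = (\<Sum>S\<in>{S \<in> Pow E. S \<subseteq> T x}. (-1::int) ^ card S)"
      by (rule sum.inter_filter[symmetric]) (simp add: \<open>finite E\<close>)
    also have "{S \<in> Pow E. S \<subseteq> T x} = Pow (E \<inter> T x)" by blast
    also have "(\<Sum>S\<in>Pow (E \<inter> T x). (-1) ^ card S) = (if E \<inter> T x = {} then 1 else 0 :: int)"
      using \<open>finite E\<close> by (intro sum_Pow_neg_one_power) simp
    finally show ?thesis .
  qed
  have "int (card {x \<in> N. E \<inter> T x = {}}) = (\<Sum>x\<in>N. if E \<inter> T x = {} then 1 else 0)"
    using \<open>finite N\<close> by (simp add: sum.inter_filter[symmetric])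
  also have "\<dots> = (\<Sum>x\<in>N. \<Sum>S\<in>Pow E. if S \<subseteq> T x then (-1) ^ card S else 0)"
    by (simp add: inner)
  also have "\<dots> = (\<Sum>S\<in>Pow E. \<Sum>x\<in>N. if S \<subseteq> T x then (-1) ^ card S else 0)"
    by (rule sum.swap)
  also have "\<dots> = (\<Sum>S\<in>Pow E. (-1) ^ card S * int (card {x \<in> N. S \<subseteq> T x}))"
    using \<open>finite N\<close> by (simp add: sum.inter_filter[symmetric] mult.commute)
  finally show ?thesis .
qed

lemma sum_Pow_card:
  fixes f :: "nat \<Rightarrow> 'a::comm_semiring_1"
  assumes "finite E"
  shows "(\<Sum>S\<in>Pow E. f (card S)) = (\<Sum>j=0..card E. of_nat (card E choose j) * f j)"
proof -
  have "(\<Sum>S\<in>Pow E. f (card S)) = (\<Sum>j=0..card E. \<Sum>S\<in>{S \<in> Pow E. card S = j}. f (card S))"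
    by (rule sum.group[symmetric]) (use assms card_mono in auto)
  also have "\<dots> = (\<Sum>j=0..card E. of_nat (card E choose j) * f j)"
    using assms by (simp add: n_subsets Pow_def)
  finally show ?thesis .
qed

lemma card_even_atLeastAtMost: "card {i \<in> {1..2 * n}. even i} = n"
proof -
  have "{i \<in> {1..2 * n}. even i} = (\<lambda>k. 2 * k) ` {1..n}" by (auto elim!: evenE)
  then show ?thesis by (simp add: card_image inj_on_def)
qed

lemma eNNC_eq: "eNNC n = {P \<in> NNC (2 * n). {i \<in> {1..2 * n}. even i} \<inter> {i. {i} \<in> P} = {}}"
  unfolding eNNC_def
proof (intro Collect_cong conj_cong refl)
  fix P assume "P \<in> NNC (2 * n)"
  then have "i \<in> {1..2 * n}" if "{i} \<in> P" for i
    using that NNC_on_subset[of P "{1..2 * n}" "{i}"] by (simp add: NNC_eq_NNC_on)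
  then show "(\<forall>i. even i \<longrightarrow> {i} \<notin> P) \<longleftrightarrow> {i \<in> {1..2 * n}. even i} \<inter> {i. {i} \<in> P} = {}"
    by blast
qed

theorem lemma4p11:
  fixes n :: nat
  assumes "n \<ge> 1"
  shows "int (card (eNNC n)) = (\<Sum>j=0..n. (-1)^j * int (n choose j) * int (card (NNC (2 * n - j))))"
proof -
  let ?E = "{i \<in> {1..2 * n}. even i}"
  have "int (card (eNNC n))
      = (\<Sum>S\<in>Pow ?E. (-1) ^ card S * int (card {P \<in> NNC (2 * n). S \<subseteq> {i. {i} \<in> P}}))"
    unfolding eNNC_eq by (rule int_card_disjoint_sieve) (simp_all add: NNC_eq_NNC_on finite_NNC_on)
  also have "\<dots> = (\<Sum>S\<in>Pow ?E. (-1) ^ card S * int (card (NNC (2 * n - card S))))"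
    by (intro sum.cong refl arg_cong2[where f = "(*)"] arg_cong[where f = int] card_NNC_with_singletons)
      auto
  also have "\<dots> = (\<Sum>j=0..card ?E. of_nat (card ?E choose j) * ((-1) ^ j * int (card (NNC (2 * n - j)))))"
    by (rule sum_Pow_card) simp
  also have "\<dots> = (\<Sum>j=0..n. (-1)^j * int (n choose j) * int (card (NNC (2 * n - j))))"
    unfolding card_even_atLeastAtMost by (simp add: mult_ac)
  finally show ?thesis .
qed

end
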